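(* For all integers $k\ge2$ and $n\ge1$, \[ k\sum_{i=1}^{n}\bigl(\sigma(i)+\sigma_o(i)\bigr)(-1)^{n-i}r_k(n-i)=(-1)^{n+1}n\,r_k(n). \]
   Context: $r_k(m)$ is the number of $(x_1,\dots,x_k)\in\mathbb{Z}^k$ with $x_1^2+\dots+x_k^2=m$; in particular $r_k(0)=1$. $\sigma(i)$ is the sum of positive divisors of $i$ and $\sigma_o(i)$ the sum of odd positive divisors of $i$. *)

theory Defs
  imports Main
begin

definition r :: "nat \<Rightarrow> nat \<Rightarrow> nat" where
  "r k m = card {x :: nat \<Rightarrow> int. (\<forall>i\<ge>k. x i = 0) \<and> (\<Sum>i<k. (x i)^2) = int m}"

definition sigma :: "nat \<Rightarrow> nat" where
  "sigma n = (\<Sum>d\<in>{d. d dvd n \<and> 0 < d}. d)"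

definition sigma_odd :: "nat \<Rightarrow> nat" where
  "sigma_odd n = (\<Sum>d\<in>{d. d dvd n \<and> 0 < d \<and> odd d}. d)"

end

(* By the Jacobi triple product, the theta series theta(q) = sum_{y in Z} q^(y^2) equals
   prod_{j>=1} (1 - q^(2j)) (1 + q^(2j-1))^2, so its logarithmic derivative q theta'/theta can be
   computed factor by factor: it is sum_{n>=1} (-1)^(n+1) (sigma(n) + sigma_o(n)) q^n.
   Since theta^k = sum_n r_k(n) q^n, comparing the coefficients of q^n in
   q (theta^k)' = k (q theta'/theta) theta^k gives
     n r_k(n) = k sum_{i=1..n} (-1)^(i+1) (sigma(i) + sigma_o(i)) r_k(n-i),
   which is the theorem after multiplying by (-1)^(n+1).
   Only the coefficients up to q^n matter, so a finite product and power series known modulo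
   q^(N+1) suffice. The finite triple product comes from the coefficients of z^k in
   prod_{i=1..N} (1 + z q^(2i-1)) (1 + z^(-1) q^(2i-1)), which are q^(k^2) times the Gaussian
   binomial coefficients [2N, N+k] in q^2. *)

theory Submission
  imports Defs "HOL-Computational_Algebra.Formal_Power_Series"
begin

unbundle fps_syntax

section \<open>Power series agreeing below a given degree\<close>

definition fps_eq_below :: "nat \<Rightarrow> 'a::zero fps \<Rightarrow> 'a fps \<Rightarrow> bool" where
  "fps_eq_below m f g \<longleftrightarrow> (\<forall>i<m. f $ i = g $ i)"

lemma fps_eq_below_refl [simp]: "fps_eq_below m f f"
  by (simp add: fps_eq_below_def)

lemma fps_eq_below_sym: "fps_eq_below m f g \<Longrightarrow> fps_eq_below m g f"
  by (simp add: fps_eq_below_def)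

lemma fps_eq_below_trans:
  "fps_eq_below m f g \<Longrightarrow> fps_eq_below m g h \<Longrightarrow> fps_eq_below m f h"
  by (simp add: fps_eq_below_def)

lemma fps_eq_below_mono: "fps_eq_below m f g \<Longrightarrow> m' \<le> m \<Longrightarrow> fps_eq_below m' f g"
  by (simp add: fps_eq_below_def)

lemma fps_eq_below_sum:
  "(\<And>i. i \<in> A \<Longrightarrow> fps_eq_below m (f i) (g i)) \<Longrightarrow>
    fps_eq_below m (\<Sum>i\<in>A. f i) (\<Sum>i\<in>A. g i)"
  by (simp add: fps_eq_below_def fps_sum_nth)

lemma fps_eq_below_mult:
  fixes f g f' g' :: "'a::comm_semiring_1 fps"
  assumes "fps_eq_below m f g" "fps_eq_below m f' g'"
  shows "fps_eq_below m (f * f') (g * g')"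
  using assms by (auto simp: fps_eq_below_def fps_mult_nth intro!: sum.cong)

lemma fps_eq_below_prod:
  fixes f g :: "'b \<Rightarrow> 'a::comm_semiring_1 fps"
  shows "(\<And>i. i \<in> A \<Longrightarrow> fps_eq_below m (f i) (g i)) \<Longrightarrow>
    fps_eq_below m (\<Prod>i\<in>A. f i) (\<Prod>i\<in>A. g i)"
  by (induction A rule: infinite_finite_induct) (simp_all add: fps_eq_below_mult)

lemma fps_eq_below_power:
  fixes f g :: "'a::comm_semiring_1 fps"
  shows "fps_eq_below m f g \<Longrightarrow> fps_eq_below m (f ^ k) (g ^ k)"
  by (induction k) (simp_all add: fps_eq_below_mult)

lemma fps_eq_below_X_power_mult:
  fixes f g :: "'a::comm_semiring_1 fps"
  shows "fps_eq_below m f g \<Longrightarrow> fps_eq_below (m + e) (fps_X ^ e * f) (fps_X ^ e * g)"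
  by (simp add: fps_eq_below_def fps_X_power_mult_nth)

lemma fps_eq_below_one_minus_X_power:
  "m \<le> e \<Longrightarrow> fps_eq_below m (1 - fps_X ^ e :: 'a::comm_ring_1 fps) 1"
  by (simp add: fps_eq_below_def)

lemma fps_eq_below_mult_cancel_left:
  fixes f g h :: "'a::comm_ring_1 fps"
  assumes unit: "h $ 0 dvd 1" and eq: "fps_eq_below m (h * f) (h * g)"
  shows "fps_eq_below m f g"
  unfolding fps_eq_below_def
proof (intro allI impI)
  obtain u where u: "1 = h $ 0 * u" using unit by (elim dvdE)
  fix i assume "i < m"
  then show "f $ i = g $ i"
  proof (induction i rule: less_induct)
    case (less i)
    have "(h * (f - g)) $ i = (\<Sum>j=0..i. h $ j * (f - g) $ (i - j))"
      by (simp only: fps_mult_nth)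
    also have "\<dots> = h $ 0 * (f - g) $ i"
      using less.IH less.prems by (subst sum.atLeast_Suc_atMost) (auto intro!: sum.neutral)
    finally have "h $ 0 * (f $ i - g $ i) = 0"
      using eq less.prems by (simp add: fps_eq_below_def algebra_simps)
    then have "u * (h $ 0 * (f $ i - g $ i)) = 0" by simp
    then show ?case using u by (simp add: mult.assoc[symmetric] mult.commute[of u])
  qed
qed

section \<open>Logarithmic derivatives\<close>

definition has_fps_log_deriv :: "'a::comm_ring_1 fps \<Rightarrow> 'a fps \<Rightarrow> bool" where
  "has_fps_log_deriv f F \<longleftrightarrow> fps_XD f = F * f"

lemma has_fps_log_deriv_one: "has_fps_log_deriv 1 0"
  by (simp add: has_fps_log_deriv_def fps_XD_def)

lemma has_fps_log_deriv_mult: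
  assumes "has_fps_log_deriv f F" "has_fps_log_deriv g G"
  shows "has_fps_log_deriv (f * g) (F + G)"
proof -
  have "fps_XD (f * g) = fps_XD f * g + f * fps_XD g"
    by (simp add: fps_XD_def algebra_simps)
  also have "\<dots> = (F + G) * (f * g)"
    using assms by (simp add: has_fps_log_deriv_def algebra_simps)
  finally show ?thesis unfolding has_fps_log_deriv_def .
qed

lemma has_fps_log_deriv_power:
  "has_fps_log_deriv f F \<Longrightarrow> has_fps_log_deriv (f ^ k) (of_nat k * F)"
proof (induction k)
  case 0
  then show ?case by (simp add: has_fps_log_deriv_one)
next
  case (Suc k)
  then have "has_fps_log_deriv (f * f ^ k) (F + of_nat k * F)"
    by (intro has_fps_log_deriv_mult)
  then show ?case by (simp add: algebra_simps)
qed

lemma has_fps_log_deriv_prod: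
  "(\<And>i. i \<in> A \<Longrightarrow> has_fps_log_deriv (g i) (G i)) \<Longrightarrow>
    has_fps_log_deriv (\<Prod>i\<in>A. g i) (\<Sum>i\<in>A. G i)"
  by (induction A rule: infinite_finite_induct)
    (simp_all add: has_fps_log_deriv_one has_fps_log_deriv_mult)

lemma has_fps_log_deriv_one_minus_power:
  fixes c :: "'a::comm_ring_1"
  assumes "0 < e"
  shows "has_fps_log_deriv (1 - (fps_const c * fps_X) ^ e)
           (Abs_fps (\<lambda>i. if 0 < i \<and> e dvd i then - of_nat e * c ^ i else 0))"
    (is "has_fps_log_deriv (1 - ?m) ?G")
  unfolding has_fps_log_deriv_def
proof (rule fps_ext)
  fix i
  have m: "?m = fps_const (c ^ e) * fps_X ^ e"
    by (simp add: power_mult_distrib)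
  have "(?G * (1 - ?m)) $ i = ?G $ i - (if i < e then 0 else c ^ e * ?G $ (i - e))"
    unfolding m by (simp add: algebra_simps fps_X_power_mult_nth)
  also have "\<dots> = (if i = e then - of_nat e * c ^ e else 0)"
  proof (cases "e < i")
    case True
    then have "e dvd i \<longleftrightarrow> e dvd (i - e)" by (simp add: dvd_minus_self)
    moreover have "c ^ e * c ^ (i - e) = c ^ i" using True by (simp add: power_add[symmetric])
    ultimately show ?thesis using True by (auto simp: algebra_simps)
  qed (use assms in \<open>auto dest: dvd_imp_le\<close>)
  also have "\<dots> = fps_XD (1 - ?m) $ i"
    unfolding fps_XD_nth m using assms by simp
  finally show "fps_XD (1 - ?m) $ i = (?G * (1 - ?m)) $ i" ..
qed

lemma sigma_plus_sigma_odd_eq_sum: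
  assumes "0 < i" "i \<le> M"
  shows "sigma i + sigma_odd i = (\<Sum>e=1..M. if e dvd i then (if odd e then 2 else 1) * e else 0)"
proof -
  have divs: "{d. d dvd i \<and> 0 < d} = {e\<in>{1..M}. e dvd i}"
    using assms by (auto dest: dvd_imp_le)
  have odd_divs: "{d. d dvd i \<and> 0 < d \<and> odd d} = {e\<in>{1..M}. e dvd i \<and> odd e}"
    using assms by (auto dest: dvd_imp_le)
  have "sigma i = (\<Sum>e=1..M. if e dvd i then e else 0)"
    unfolding sigma_def divs by (rule sum.inter_filter) simp
  moreover have "sigma_odd i = (\<Sum>e=1..M. if e dvd i \<and> odd e then e else 0)"
    unfolding sigma_odd_def odd_divs by (rule sum.inter_filter) simp
  ultimately have "sigma i + sigma_odd i
      = (\<Sum>e=1..M. if e dvd i then e else 0) + (\<Sum>e=1..M. if e dvd i \<and> odd e then e else 0)"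
    by simp
  also have "\<dots> = (\<Sum>e=1..M. if e dvd i then (if odd e then 2 else 1) * e else 0)"
    by (auto simp: sum.distrib[symmetric] intro!: sum.cong)
  finally show ?thesis .
qed

text \<open>The finite product \<open>\<Prod>j=1..N. (1 - X^(2j)) (1 + X^(2j-1))\<^sup>2\<close>, written as a product over
  \<open>e = 2j\<close> and \<open>e = 2j - 1\<close> of \<open>1 - (-X)^e\<close>: in this form every factor contributes to the
  coefficient of \<open>X^i\<close> of the logarithmic derivative with the same sign \<open>(-1)^(i+1)\<close>.\<close>
definition theta :: "nat \<Rightarrow> 'a::comm_ring_1 fps" where
  "theta N = (\<Prod>e=1..2*N. (1 - (- fps_X) ^ e) ^ (if odd e then 2 else 1))"

definition theta_log_deriv :: "nat \<Rightarrow> 'a::comm_ring_1 fps" where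
  "theta_log_deriv N = (\<Sum>e=1..2*N. of_nat (if odd e then 2 else 1) *
     Abs_fps (\<lambda>i. if 0 < i \<and> e dvd i then - of_nat e * (-1) ^ i else 0))"

lemma has_fps_log_deriv_theta: "has_fps_log_deriv (theta N) (theta_log_deriv N)"
  unfolding theta_def theta_log_deriv_def
proof (intro has_fps_log_deriv_prod has_fps_log_deriv_power)
  fix e :: nat assume "e \<in> {1..2*N}"
  then have "has_fps_log_deriv (1 - (fps_const (-1) * fps_X) ^ e)
      (Abs_fps (\<lambda>i. if 0 < i \<and> e dvd i then - of_nat e * (-1) ^ i else 0))"
    by (intro has_fps_log_deriv_one_minus_power) simp
  then show "has_fps_log_deriv (1 - (- fps_X) ^ e)
      (Abs_fps (\<lambda>i. if 0 < i \<and> e dvd i then - of_nat e * (-1) ^ i else 0))"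
    by (simp add: fps_const_neg[symmetric])
qed

lemma theta_log_deriv_nth_0: "theta_log_deriv N $ 0 = 0"
  by (simp add: theta_log_deriv_def fps_sum_nth)

lemma theta_log_deriv_nth:
  assumes "0 < i" "i \<le> 2 * N"
  shows "theta_log_deriv N $ i = (-1) ^ (i + 1) * of_nat (sigma i + sigma_odd i)"
proof -
  have "theta_log_deriv N $ i
      = (-1) ^ (i + 1) * of_nat (\<Sum>e=1..2*N. if e dvd i then (if odd e then 2 else 1) * e else 0)"
    unfolding theta_log_deriv_def fps_sum_nth of_nat_sum sum_distrib_left
    using assms(1) by (intro sum.cong refl) auto
  then show ?thesis
    using sigma_plus_sigma_odd_eq_sum[OF assms] by simp
qed

section \<open>Representations as sums of squares\<close>

lemma abs_le_square_int: "\<bar>y\<bar> \<le> (y::int)\<^sup>2"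
proof (cases "y = 0")
  case False
  then have "\<bar>y\<bar> * 1 \<le> \<bar>y\<bar> * \<bar>y\<bar>" by (intro mult_left_mono) auto
  then show ?thesis by (simp add: power2_eq_square)
qed simp

lemma finite_square_roots: "finite {y::int. y\<^sup>2 = int m}"
proof (rule finite_subset)
  show "{y::int. y\<^sup>2 = int m} \<subseteq> {- int m..int m}"
  proof
    fix y assume "y \<in> {y::int. y\<^sup>2 = int m}"
    then have "\<bar>y\<bar> \<le> int m" using abs_le_square_int[of y] by simp
    then show "y \<in> {- int m..int m}" by auto
  qed
qed simp

definition square_reps :: "nat \<Rightarrow> nat \<Rightarrow> (nat \<Rightarrow> int) set" where
  "square_reps k m = {x. (\<forall>i\<ge>k. x i = 0) \<and> (\<Sum>i<k. (x i)\<^sup>2) = int m}"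

lemma r_eq_card_square_reps: "r k m = card (square_reps k m)"
  by (simp add: r_def square_reps_def)

lemma square_reps_0: "square_reps 0 m = (if m = 0 then {\<lambda>_. 0} else {})"
  by (auto simp: square_reps_def fun_eq_iff)

lemma bij_betw_square_reps_Suc:
  "bij_betw (\<lambda>(i, x, y). x(k := y))
     (SIGMA i:{0..m}. square_reps k i \<times> {y. y\<^sup>2 = int (m - i)}) (square_reps (Suc k) m)"
proof (rule bij_betw_imageI)
  show "inj_on (\<lambda>(i, x, y). x(k := y)) (SIGMA i:{0..m}. square_reps k i \<times> {y. y\<^sup>2 = int (m - i)})"
  proof (rule inj_onI, clarsimp)
    fix i x y i' x' y'
    assume x: "x \<in> square_reps k i" and x': "x' \<in> square_reps k i'" and eq: "x(k := y) = x'(k := y')"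
    have "x k = 0" "x' k = 0" using x x' by (auto simp: square_reps_def)
    then have "x = x'" using eq by (metis fun_upd_triv fun_upd_upd)
    moreover have "y = y'" using eq by (metis fun_upd_same)
    moreover have "i = i'" using x x' \<open>x = x'\<close> by (simp add: square_reps_def)
    ultimately show "i = i' \<and> x = x' \<and> y = y'" by simp
  qed
next
  show "(\<lambda>(i, x, y). x(k := y)) ` (SIGMA i:{0..m}. square_reps k i \<times> {y. y\<^sup>2 = int (m - i)})
      = square_reps (Suc k) m"
  proof safe
    fix i x y assume "i \<in> {0..m}" "x \<in> square_reps k i" "y\<^sup>2 = int (m - i)"
    then show "x(k := y) \<in> square_reps (Suc k) m"
      by (auto simp: square_reps_def)
  next
    fix f assume f: "f \<in> square_reps (Suc k) m"
    define s where "s = (\<Sum>l<k. (f l)\<^sup>2)"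
    have s: "0 \<le> s" "s + (f k)\<^sup>2 = int m"
      using f by (auto simp: s_def square_reps_def intro: sum_nonneg)
    then have "s \<le> int m" by (smt (verit) zero_le_power2)
    then have "nat s \<in> {0..m}" by simp
    moreover have "f(k := 0) \<in> square_reps k (nat s)"
      using f s by (auto simp: square_reps_def s_def intro: sum.cong)
    moreover have "(f k)\<^sup>2 = int (m - nat s)"
      using s \<open>s \<le> int m\<close> by simp
    ultimately show "f \<in> (\<lambda>(i, x, y). x(k := y)) `
        (SIGMA i:{0..m}. square_reps k i \<times> {y. y\<^sup>2 = int (m - i)})"
      by (intro image_eqI[where x = "(nat s, f(k := 0), f k)"]) auto
  qed
qed

lemma finite_square_reps: "finite (square_reps k m)"
proof (induction k arbitrary: m)
  case 0
  then show ?case by (simp add: square_reps_0)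
next
  case (Suc k)
  have "finite (SIGMA i:{0..m}. square_reps k i \<times> {y. y\<^sup>2 = int (m - i)})"
    by (intro finite_SigmaI finite_cartesian_product Suc.IH finite_square_roots) simp
  then show ?case by (simp add: bij_betw_finite[OF bij_betw_square_reps_Suc])
qed

lemma r_Suc: "r (Suc k) m = (\<Sum>i=0..m. r k i * card {y::int. y\<^sup>2 = int (m - i)})"
proof -
  have "r (Suc k) m = card (SIGMA i:{0..m}. square_reps k i \<times> {y. y\<^sup>2 = int (m - i)})"
    unfolding r_eq_card_square_reps by (rule bij_betw_same_card[OF bij_betw_square_reps_Suc, symmetric])
  also have "\<dots> = (\<Sum>i=0..m. card (square_reps k i \<times> {y. y\<^sup>2 = int (m - i)}))"
    by (rule card_SigmaI) (simp, intro ballI finite_cartesian_product finite_square_reps finite_square_roots)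
  also have "\<dots> = (\<Sum>i=0..m. r k i * card {y::int. y\<^sup>2 = int (m - i)})"
    by (simp add: card_cartesian_product r_eq_card_square_reps)
  finally show ?thesis .
qed

definition theta_series :: "'a::comm_semiring_1 fps" where
  "theta_series = Abs_fps (\<lambda>m. of_nat (card {y::int. y\<^sup>2 = int m}))"

lemma theta_series_nth: "theta_series $ m = of_nat (card {y::int. y\<^sup>2 = int m})"
  by (simp add: theta_series_def)

lemma theta_series_power_nth: "(theta_series ^ k) $ m = (of_nat (r k m) :: 'a::comm_semiring_1)"
proof (induction k arbitrary: m)
  case 0
  then show ?case by (simp add: r_eq_card_square_reps square_reps_0)
next
  case (Suc k)
  have "(theta_series ^ Suc k :: 'a fps) $ m = (theta_series ^ k * theta_series) $ m"
    by (simp only: power_Suc2)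
  also have "\<dots> = of_nat (r (Suc k) m)"
    unfolding fps_mult_nth Suc.IH theta_series_nth r_Suc by simp
  finally show ?case .
qed

section \<open>A finite form of the Jacobi triple product\<close>

text \<open>\<open>qseg 0 h\<close> is the q-Pochhammer symbol \<open>(X\<^sup>2; X\<^sup>2)_h\<close>. A factor with \<open>i \<le> 0\<close> is
  \<open>1 - X^0 = 0\<close> (as \<open>nat (2 * i) = 0\<close>), hence \<open>qseg l h = 0\<close> whenever \<open>l < 0 \<le> h\<close>; this absorbs
  the boundary cases in \<open>qc_closed_form_extend\<close>.\<close>
definition qseg :: "int \<Rightarrow> int \<Rightarrow> int fps" where
  "qseg l h = (\<Prod>i\<in>{l<..h}. 1 - fps_X ^ nat (2 * i))"

lemma qseg_empty: "h \<le> l \<Longrightarrow> qseg l h = 1"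
  by (simp add: qseg_def)

lemma qseg_split: "l \<le> m \<Longrightarrow> m \<le> h \<Longrightarrow> qseg l h = qseg l m * qseg m h"
proof -
  assume "l \<le> m" "m \<le> h"
  then have "{l<..h} = {l<..m} \<union> {m<..h}" by auto
  then show ?thesis
    unfolding qseg_def by (simp add: prod.union_disjoint ivl_disj_int_two(4)[symmetric])
qed

lemma qseg_Suc: "l \<le> h \<Longrightarrow> qseg l (h + 1) = qseg l h * (1 - fps_X ^ nat (2 * (h + 1)))"
proof -
  assume "l \<le> h"
  then have "qseg l (h + 1) = qseg l h * qseg h (h + 1)" by (intro qseg_split) auto
  moreover have "{h<..h + 1} = {h + 1}" by auto
  ultimately show ?thesis by (simp add: qseg_def)
qed

lemma qseg_eq_0: "l < 0 \<Longrightarrow> 0 \<le> h \<Longrightarrow> qseg l h = 0"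
  unfolding qseg_def by (rule prod_zero) (auto intro: bexI[of _ 0])

lemma qseg_eq_below_one: "fps_eq_below (2 * m + 2) (qseg (int m) h) 1"
proof -
  have "fps_eq_below (2 * m + 2) (qseg (int m) h) (\<Prod>i\<in>{int m<..h}. 1)"
    unfolding qseg_def by (intro fps_eq_below_prod fps_eq_below_one_minus_X_power) auto
  then show ?thesis by simp
qed

lemma qseg_nth_0: "qseg (int m) h $ 0 = 1"
  using qseg_eq_below_one[of m h] by (auto simp: fps_eq_below_def dest: spec[of _ 0])

lemma qseg_0_eq_below: "int m \<le> h \<Longrightarrow> fps_eq_below (2 * m + 2) (qseg 0 h) (qseg 0 (int m))"
  using fps_eq_below_mult[OF fps_eq_below_refl qseg_eq_below_one, of _ "qseg 0 (int m)"]
  by (simp add: qseg_split[of 0 "int m" h])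

text \<open>\<open>qc N k\<close> is the coefficient of \<open>z^k\<close> in \<open>\<Prod>i=1..N. (1 + z X^(2i-1)) (1 + z^(-1) X^(2i-1))\<close>;
  the recursion multiplies in the factor for \<open>i = N + 1\<close>.\<close>
fun qc :: "nat \<Rightarrow> int \<Rightarrow> int fps" where
  "qc 0 k = (if k = 0 then 1 else 0)"
| "qc (Suc N) k = (1 + fps_X ^ (2 * (2 * N + 1))) * qc N k
     + fps_X ^ (2 * N + 1) * (qc N (k - 1) + qc N (k + 1))"

lemma qc_eq_0: "int N < \<bar>k\<bar> \<Longrightarrow> qc N k = 0"
  by (induction N arbitrary: k) auto

lemma qc_uminus: "qc N (- k) = qc N k"
proof (induction N arbitrary: k)
  case (Suc N)
  have "- k - 1 = - (k + 1)" "- k + 1 = - (k - 1)" by simp_all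
  then show ?case by (simp only: qc.simps Suc.IH add.commute)
qed simp

lemma qc_top: "qc N (int N) = fps_X ^ (N\<^sup>2)"
proof (induction N)
  case (Suc N)
  have "qc N (int N + 1) = 0" "qc N (int N + 2) = 0" by (auto intro: qc_eq_0)
  then have "qc (Suc N) (int (Suc N)) = fps_X ^ (2 * N + 1) * fps_X ^ (N\<^sup>2)"
    using Suc by (simp add: add.commute)
  then show ?case by (simp add: power_add[symmetric] power2_eq_square)
qed simp

text \<open>With \<open>t = X\<^sup>2\<close>, \<open>u = X^(2(N+j))\<close> and \<open>v = X^(2(N-j))\<close> this is the recursion for
  \<open>qc (N + 1) j\<close> after inserting the closed form at level \<open>N\<close>, see \<open>qc_closed_form_step\<close>.\<close>
lemma triple_product_step_identity:
  fixes t u v :: "'a::comm_ring_1"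
  shows "(1 + t * u * v) * ((1 - t * u) * (1 - t * v))
      + t * v * ((1 - u) * (1 - t * u)) + t * u * ((1 - v) * (1 - t * v))
    = (1 - t * u * v) * (1 - t * t * u * v)"
  by (simp add: algebra_simps)

text \<open>The closed form \<open>qc N j = X^(j\<^sup>2) (X\<^sup>2;X\<^sup>2)_2N / ((X\<^sup>2;X\<^sup>2)_(N+j) (X\<^sup>2;X\<^sup>2)_(N-j))\<close>,
  stated without division, is proved by induction on \<open>N\<close>; the following lemmas take it as a
  hypothesis at level \<open>N\<close>.\<close>
lemma qc_closed_form_extend:
  assumes closed: "\<And>j. \<bar>j\<bar> \<le> int N \<Longrightarrow>
      qseg 0 (N + j) * qseg 0 (N - j) * qc N j = fps_X ^ nat (j\<^sup>2) * qseg 0 (2 * int N)"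
    and "N + j \<le> a" "N - j \<le> b" "0 \<le> a" "0 \<le> b"
  shows "qseg 0 a * qseg 0 b * qc N j
    = qseg (N + j) a * qseg (N - j) b * (fps_X ^ nat (j\<^sup>2) * qseg 0 (2 * int N))"
proof (cases "\<bar>j\<bar> \<le> int N")
  case True
  then have "qseg 0 a * qseg 0 b * qc N j
      = qseg (N + j) a * qseg (N - j) b * (qseg 0 (N + j) * qseg 0 (N - j) * qc N j)"
    using assms by (simp add: qseg_split[of 0 "N + j" a] qseg_split[of 0 "N - j" b] algebra_simps)
  then show ?thesis using closed[OF True] by simp
next
  case False
  then have "N + j < 0 \<or> N - j < 0" by auto
  then show ?thesis using False assms by (auto simp: qc_eq_0 qseg_eq_0)
qed

lemma qseg_one_factor: "qseg (int a) (int a + 1) = 1 - fps_X ^ (2 * a + 2)"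
proof -
  have "{int a<..int a + 1} = {int a + 1}" "nat (2 * (int a + 1)) = 2 * a + 2" by auto
  then show ?thesis by (simp add: qseg_def)
qed

lemma qseg_two_factors:
  "qseg (int a - 1) (int a + 1) = (1 - fps_X ^ (2 * a)) * (1 - fps_X ^ (2 * a + 2))"
proof -
  have "{int a - 1<..int a + 1} = {int a, int a + 1}"
    "nat (2 * int a) = 2 * a" "nat (2 * (int a + 1)) = 2 * a + 2" by auto
  then show ?thesis by (simp add: qseg_def)
qed

lemma qseg_0_double_Suc:
  "qseg 0 (2 * int (Suc N))
    = qseg 0 (2 * int N) * ((1 - fps_X ^ (2 * (2 * N + 1))) * (1 - fps_X ^ (2 * (2 * N + 1) + 2)))"
proof -
  have "int (2 * N + 1) - 1 = 2 * int N" "int (2 * N + 1) + 1 = 2 * int (Suc N)" by simp_all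
  then have "qseg 0 (2 * int (Suc N)) = qseg 0 (2 * int N) * qseg (int (2 * N + 1) - 1) (int (2 * N + 1) + 1)"
    by (simp only:) (rule qseg_split; simp)
  then show ?thesis by (simp only: qseg_two_factors)
qed

lemma fps_X_power_odd_mult_square:
  assumes "j \<le> int N"
  shows "fps_X ^ (2 * N + 1) * fps_X ^ nat ((j - 1)\<^sup>2) = fps_X ^ nat (j\<^sup>2) * fps_X ^ (2 * nat (N - j) + 2)"
proof -
  have "int (nat ((j - 1)\<^sup>2)) = (j - 1)\<^sup>2" "int (nat (j\<^sup>2)) = j\<^sup>2" by simp_all
  then have "int (2 * N + 1 + nat ((j - 1)\<^sup>2)) = int (nat (j\<^sup>2) + (2 * nat (N - j) + 2))"
    using assms by (simp add: power2_diff algebra_simps)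
  then show ?thesis unfolding power_add[symmetric] of_nat_eq_iff by (rule arg_cong)
qed

lemma qc_closed_form_neighbour:
  assumes closed: "\<And>j. \<bar>j\<bar> \<le> int N \<Longrightarrow>
      qseg 0 (N + j) * qseg 0 (N - j) * qc N j = fps_X ^ nat (j\<^sup>2) * qseg 0 (2 * int N)"
    and pq: "int N + j = int p" "int N - j = int q"
  shows "fps_X ^ (2 * N + 1) * (qseg 0 (int p + 1) * qseg 0 (int q + 1) * qc N (j - 1))
    = fps_X ^ nat (j\<^sup>2) * fps_X ^ (2 * q + 2) * ((1 - fps_X ^ (2 * p)) * (1 - fps_X ^ (2 * p + 2)))
      * qseg 0 (2 * int N)"
proof -
  have shifts: "N + (j - 1) = int p - 1" "N - (j - 1) = int q + 1" and "j \<le> int N"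
    using pq by linarith+
  have "nat (int N - j) = q" using pq by simp
  have shifted: "qseg 0 (int p + 1) * qseg 0 (int q + 1) * qc N (j - 1)
      = (1 - fps_X ^ (2 * p)) * (1 - fps_X ^ (2 * p + 2)) * (fps_X ^ nat ((j - 1)\<^sup>2) * qseg 0 (2 * int N))"
    using qc_closed_form_extend[OF closed, of "j - 1" "int p + 1" "int q + 1"]
    unfolding shifts qseg_two_factors by (simp add: qseg_empty)
  have square: "fps_X ^ (2 * N + 1) * fps_X ^ nat ((j - 1)\<^sup>2)
      = fps_X ^ nat (j\<^sup>2) * (fps_X ^ (2 * q + 2) :: int fps)"
    using fps_X_power_odd_mult_square[OF \<open>j \<le> int N\<close>] unfolding \<open>nat (int N - j) = q\<close> .
  have "fps_X ^ (2 * N + 1) * (qseg 0 (int p + 1) * qseg 0 (int q + 1) * qc N (j - 1))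
      = fps_X ^ (2 * N + 1) * fps_X ^ nat ((j - 1)\<^sup>2)
        * ((1 - fps_X ^ (2 * p)) * (1 - fps_X ^ (2 * p + 2)) * qseg 0 (2 * int N))"
    unfolding shifted by (simp only: mult_ac)
  then show ?thesis unfolding square by (simp only: mult_ac)
qed

lemma qc_closed_form_step:
  assumes closed: "\<And>j. \<bar>j\<bar> \<le> int N \<Longrightarrow>
      qseg 0 (N + j) * qseg 0 (N - j) * qc N j = fps_X ^ nat (j\<^sup>2) * qseg 0 (2 * int N)"
    and j: "\<bar>j\<bar> \<le> int N"
  shows "qseg 0 (int (Suc N) + j) * qseg 0 (int (Suc N) - j) * qc (Suc N) j
    = fps_X ^ nat (j\<^sup>2) * qseg 0 (2 * int (Suc N))"
proof -
  define p where "p = nat (N + j)"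
  define q where "q = nat (N - j)"
  have pq: "int N + j = int p" "int N - j = int q" and qp: "int N + - j = int q" "int N - - j = int p"
    using j by (simp_all add: p_def q_def)
  define A where "A = qseg 0 (int p + 1) * qseg 0 (int q + 1)"
  define Y where "Y = qseg 0 (2 * int N)"
  define t :: "int fps" where "t = fps_X ^ 2"
  define u :: "int fps" where "u = fps_X ^ (2 * p)"
  define v :: "int fps" where "v = fps_X ^ (2 * q)"
  have tu: "fps_X ^ (2 * p + 2) = t * u" and tv: "fps_X ^ (2 * q + 2) = t * v"
    by (simp_all add: t_def u_def v_def power_add power2_eq_square)
  have "p + q = 2 * N" using pq by linarith
  then have "2 * (2 * N + 1) = 2 + 2 * p + 2 * q" by simp
  then have tuv: "fps_X ^ (2 * (2 * N + 1)) = t * u * v"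
    by (simp only: t_def u_def v_def power_add)
  then have tuv2: "fps_X ^ (2 * (2 * N + 1) + 2) = t * t * u * v"
    by (simp only: power_add t_def[symmetric] mult.commute mult.left_commute)
  have zero: "A * qc N j = fps_X ^ nat (j\<^sup>2) * ((1 - t * u) * (1 - t * v)) * Y"
    using qc_closed_form_extend[OF closed, of j "int p + 1" "int q + 1"]
    unfolding A_def Y_def pq qseg_one_factor tu tv by (simp add: mult_ac)
  have minus: "fps_X ^ (2 * N + 1) * (A * qc N (j - 1))
      = fps_X ^ nat (j\<^sup>2) * (t * v) * ((1 - u) * (1 - t * u)) * Y"
    using qc_closed_form_neighbour[OF closed pq] unfolding A_def Y_def u_def tu tv .
  have "qc N (- j - 1) = qc N (j + 1)" using qc_uminus[of N "j + 1"] by simp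
  then have plus: "fps_X ^ (2 * N + 1) * (A * qc N (j + 1))
      = fps_X ^ nat (j\<^sup>2) * (t * u) * ((1 - v) * (1 - t * v)) * Y"
    using qc_closed_form_neighbour[OF closed qp] unfolding A_def Y_def v_def tu tv
    by (simp add: mult.commute)
  have "A * qc (Suc N) j = (1 + fps_X ^ (2 * (2 * N + 1))) * (A * qc N j)
      + fps_X ^ (2 * N + 1) * (A * qc N (j - 1)) + fps_X ^ (2 * N + 1) * (A * qc N (j + 1))"
    by (simp add: algebra_simps)
  also have "\<dots> = fps_X ^ nat (j\<^sup>2) * Y * ((1 + t * u * v) * ((1 - t * u) * (1 - t * v))
      + t * v * ((1 - u) * (1 - t * u)) + t * u * ((1 - v) * (1 - t * v)))"
    unfolding zero minus plus tuv by (simp add: algebra_simps)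
  also have "\<dots> = fps_X ^ nat (j\<^sup>2) * qseg 0 (2 * int (Suc N))"
    unfolding triple_product_step_identity qseg_0_double_Suc tuv tuv2 Y_def by (simp add: algebra_simps)
  moreover have "int (Suc N) + j = int p + 1" "int (Suc N) - j = int q + 1"
    using pq by simp_all
  ultimately show ?thesis by (simp only: A_def)
qed

lemma qc_closed_form:
  "\<bar>j\<bar> \<le> int N \<Longrightarrow>
    qseg 0 (N + j) * qseg 0 (N - j) * qc N j = fps_X ^ nat (j\<^sup>2) * qseg 0 (2 * int N)"
proof (induction N arbitrary: j)
  case 0
  then show ?case by (simp add: qseg_empty)
next
  case (Suc N)
  show ?case
  proof (cases "\<bar>j\<bar> \<le> int N")
    case True
    show ?thesis by (rule qc_closed_form_step[OF Suc.IH True])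
  next
    case False
    then have abs_j: "\<bar>j\<bar> = int (Suc N)" using Suc.prems by simp
    have "qc (Suc N) j = qc (Suc N) \<bar>j\<bar>"
    proof (cases "0 \<le> j")
      case False
      then have "\<bar>j\<bar> = - j" by simp
      then show ?thesis by (simp only: qc_uminus)
    qed (simp only: abs_of_nonneg)
    moreover have "j\<^sup>2 = int ((Suc N)\<^sup>2)"
      unfolding power2_abs[of j, symmetric] abs_j of_nat_power ..
    ultimately have "qc (Suc N) j = fps_X ^ nat (j\<^sup>2)"
      by (simp only: abs_j qc_top nat_int)
    moreover have "qseg 0 (int (Suc N) + j) * qseg 0 (int (Suc N) - j) = qseg 0 (2 * int (Suc N))"
    proof -
      have "int (Suc N) + j = 2 * int (Suc N) \<and> int (Suc N) - j = 0
          \<or> int (Suc N) + j = 0 \<and> int (Suc N) - j = 2 * int (Suc N)"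
        using abs_j by (cases "0 \<le> j") auto
      moreover have "qseg 0 0 = 1" by (simp add: qseg_empty)
      ultimately show ?thesis by (elim disjE conjE) (simp_all only: mult_1_left mult_1_right)
    qed
    ultimately show ?thesis by (simp only: mult.commute)
  qed
qed

lemma sum_qc_shift:
  assumes "a + d \<le> - int N" "int N \<le> b + d"
  shows "(\<Sum>k=a..b. qc N (k + d)) = (\<Sum>k = - int N..int N. qc N k)"
proof -
  have "(\<Sum>k=a..b. qc N (k + d)) = (\<Sum>k=a + d..b + d. qc N k)"
    using sum.reindex[of "\<lambda>k. k + d" "{a..b}" "qc N"] by simp
  also have "\<dots> = (\<Sum>k = - int N..int N. qc N k)"
    using assms by (intro sum.mono_neutral_right) (auto simp: qc_eq_0)
  finally show ?thesis .
qed

lemma sum_qc: "(\<Sum>k = - int N..int N. qc N k) = (\<Prod>i=1..N. (1 + fps_X ^ (2 * i - 1))\<^sup>2)"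
proof (induction N)
  case 0
  then show ?case by simp
next
  case (Suc N)
  define S where "S = (\<Sum>k = - int N..int N. qc N k)"
  define I where "I = {- int (Suc N)..int (Suc N)}"
  have "(\<Sum>k\<in>I. qc (Suc N) k) = (1 + fps_X ^ (2 * (2 * N + 1))) * (\<Sum>k\<in>I. qc N (k + 0))
      + fps_X ^ (2 * N + 1) * ((\<Sum>k\<in>I. qc N (k + - 1)) + (\<Sum>k\<in>I. qc N (k + 1)))"
    by (simp add: sum.distrib sum_distrib_left distrib_left)
  also have "\<dots> = ((1 + fps_X ^ (2 * (2 * N + 1))) + 2 * fps_X ^ (2 * N + 1)) * S"
    unfolding I_def S_def by (subst (1 2 3) sum_qc_shift) (simp_all add: algebra_simps)
  also have "(1 + fps_X ^ (2 * (2 * N + 1))) + 2 * fps_X ^ (2 * N + 1) = (1 + fps_X ^ (2 * N + 1) :: int fps)\<^sup>2"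
    unfolding power_mult power2_eq_square by (simp add: algebra_simps)
  finally show ?case
    using Suc.IH by (simp add: I_def S_def mult.commute)
qed

text \<open>All of \<open>qseg 0 (2N)\<close>, \<open>qseg 0 N\<close> and \<open>qseg 0 (N \<plusminus> k)\<close> agree with \<open>qseg 0 (N - \<bar>k\<bar>)\<close>
  below degree \<open>2(N - \<bar>k\<bar>) + 2\<close>, and this degree plus \<open>k\<^sup>2\<close> exceeds \<open>N\<close>. So multiplying the
  closed form by \<open>qseg 0 N\<close> and cancelling \<open>qseg 0 (N + k) qseg 0 (N - k)\<close> gives the claim.\<close>
lemma qseg_mult_qc_eq_below:
  assumes k: "\<bar>k\<bar> \<le> int N"
  shows "fps_eq_below (N + 1) (qseg 0 N * qc N k) (fps_X ^ nat (k\<^sup>2))"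
proof -
  define a where "a = nat \<bar>k\<bar>"
  define m where "m = N - a"
  define b where "b = qseg 0 (N + k)"
  define c where "c = qseg 0 (N - k)"
  define P where "P = qseg 0 (int m)"
  have a: "int a = \<bar>k\<bar>" "a \<le> N" "nat (k\<^sup>2) = a\<^sup>2"
    using k by (simp_all add: a_def nat_power_eq[symmetric])
  have P: "fps_eq_below (2 * m + 2) (qseg 0 h) P" if "int m \<le> h" for h
    unfolding P_def using that by (rule qseg_0_eq_below)
  have "int m \<le> 2 * int N" "int m \<le> N" "int m \<le> N + k" "int m \<le> N - k"
    using a by (auto simp: m_def)
  then have "fps_eq_below (2 * m + 2) (qseg 0 (2 * int N) * qseg 0 N) (P * P)"
    "fps_eq_below (2 * m + 2) (b * c) (P * P)"
    unfolding b_def c_def by (blast intro: fps_eq_below_mult P)+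
  then have "fps_eq_below (2 * m + 2) (qseg 0 (2 * int N) * qseg 0 N) (b * c)"
    by (blast intro: fps_eq_below_trans fps_eq_below_sym)
  then have "fps_eq_below (2 * m + 2 + a\<^sup>2)
      (fps_X ^ a\<^sup>2 * (qseg 0 (2 * int N) * qseg 0 N)) (fps_X ^ a\<^sup>2 * (b * c))"
    by (rule fps_eq_below_X_power_mult)
  moreover have "fps_X ^ a\<^sup>2 * (qseg 0 (2 * int N) * qseg 0 N) = b * c * (qseg 0 N * qc N k)"
  proof -
    have closed: "b * c * qc N k = fps_X ^ a\<^sup>2 * qseg 0 (2 * int N)"
      using qc_closed_form[OF k] by (simp only: b_def c_def a(3))
    have "b * c * (qseg 0 N * qc N k) = qseg 0 N * (b * c * qc N k)" by (simp only: mult_ac)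
    also have "\<dots> = fps_X ^ a\<^sup>2 * (qseg 0 (2 * int N) * qseg 0 N)"
      unfolding closed by (simp only: mult_ac)
    finally show ?thesis by (rule sym)
  qed
  moreover have "N + 1 \<le> 2 * m + 2 + a\<^sup>2"
    using a(2) by (simp add: m_def power2_eq_square) (cases a; simp)
  ultimately have "fps_eq_below (N + 1) (b * c * (qseg 0 N * qc N k)) (fps_X ^ a\<^sup>2 * (b * c))"
    by (simp add: fps_eq_below_mono)
  then have eq: "fps_eq_below (N + 1) (b * c * (qseg 0 N * qc N k)) (b * c * fps_X ^ a\<^sup>2)"
    by (simp only: mult.commute)
  have unit: "(b * c) $ 0 dvd 1"
    using qseg_nth_0[of 0] by (simp add: b_def c_def)
  show ?thesis
    unfolding a(3) using fps_eq_below_mult_cancel_left[OF unit eq] .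
qed

lemma theta_eq_qseg_mult_prod:
  "(theta N :: int fps) = qseg 0 N * (\<Prod>i=1..N. (1 + fps_X ^ (2 * i - 1))\<^sup>2)"
proof (induction N)
  case 0
  then show ?case by (simp add: theta_def qseg_empty)
next
  case (Suc N)
  have "(\<Prod>e=1..2 * Suc N. g e) = (\<Prod>e=1..2 * N. g e) * g (2 * N + 1) * g (2 * N + 2)"
    for g :: "nat \<Rightarrow> int fps"
    by (simp add: mult.assoc)
  then have "(theta (Suc N) :: int fps)
      = theta N * (1 - (- fps_X) ^ (2 * N + 1))\<^sup>2 * (1 - (- fps_X) ^ (2 * N + 2))"
    unfolding theta_def by simp
  also have "\<dots> = theta N * (1 + fps_X ^ (2 * N + 1))\<^sup>2 * (1 - fps_X ^ (2 * N + 2))"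
    by simp
  finally have theta: "(theta (Suc N) :: int fps)
      = theta N * (1 + fps_X ^ (2 * N + 1))\<^sup>2 * (1 - fps_X ^ (2 * N + 2))" .
  have "nat (2 * (int N + 1)) = 2 * N + 2" by (simp add: nat_eq_iff)
  then have qseg: "qseg 0 (int (Suc N)) = qseg 0 (int N) * (1 - fps_X ^ (2 * N + 2))"
    using qseg_Suc[of 0 "int N"] by (simp add: add.commute)
  have prod: "(\<Prod>i=1..Suc N. (1 + fps_X ^ (2 * i - 1))\<^sup>2)
      = (\<Prod>i=1..N. (1 + fps_X ^ (2 * i - 1))\<^sup>2) * (1 + fps_X ^ (2 * N + 1) :: int fps)\<^sup>2"
    by simp
  show ?case
    unfolding theta Suc.IH qseg prod by (simp only: mult_ac)
qed

lemma theta_eq_below_theta_series: "fps_eq_below (N + 1) (theta N :: int fps) theta_series"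
proof -
  define K where "K = {- int N..int N}"
  have "(theta N :: int fps) = (\<Sum>k\<in>K. qseg 0 N * qc N k)"
    unfolding K_def by (simp only: theta_eq_qseg_mult_prod sum_qc[symmetric] sum_distrib_left)
  moreover have "fps_eq_below (N + 1) (\<Sum>k\<in>K. qseg 0 N * qc N k) (\<Sum>k\<in>K. fps_X ^ nat (k\<^sup>2))"
    unfolding K_def by (intro fps_eq_below_sum qseg_mult_qc_eq_below) auto
  moreover have "(\<Sum>k\<in>K. fps_X ^ nat (k\<^sup>2)) $ j = theta_series $ j" if "j < N + 1" for j
  proof -
    have "{k \<in> K. nat (k\<^sup>2) = j} = {y. y\<^sup>2 = int j}"
    proof safe
      fix y :: int assume "y\<^sup>2 = int j"
      then have "\<bar>y\<bar> \<le> int N" using abs_le_square_int[of y] that by simp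
      then show "y \<in> K" by (simp add: K_def abs_le_iff)
    qed auto
    moreover have "(\<Sum>k\<in>K. fps_X ^ nat (k\<^sup>2)) $ j = of_nat (card {k \<in> K. nat (k\<^sup>2) = j})"
      by (simp add: fps_sum_nth K_def sum.If_cases)
        (rule arg_cong[where f = "\<lambda>A. of_nat (card A)"], auto)
    ultimately show ?thesis by (simp add: theta_series_nth)
  qed
  ultimately show ?thesis
    by (auto simp: fps_eq_below_def)
qed

section \<open>The recurrence for sums of squares\<close>

lemma r_recurrence:
  "int n * int (r k n)
    = int k * (\<Sum>i=1..n. (-1) ^ (i + 1) * int (sigma i + sigma_odd i) * int (r k (n - i)))"
proof -
  define f :: "int fps" where "f = theta n ^ k"
  define F :: "int fps" where "F = theta_log_deriv n"
  have "fps_eq_below (n + 1) f (theta_series ^ k)"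
    unfolding f_def by (intro fps_eq_below_power theta_eq_below_theta_series)
  then have f_nth: "f $ j = int (r k j)" if "j \<le> n" for j
    using that by (simp add: fps_eq_below_def theta_series_power_nth)
  have "fps_XD f = (of_nat k * F) * f"
    using has_fps_log_deriv_power[OF has_fps_log_deriv_theta, of n k]
    by (simp add: has_fps_log_deriv_def f_def F_def)
  then have "int n * f $ n = (of_nat k * F * f) $ n"
    by (metis fps_XD_nth)
  also have "\<dots> = int k * (F * f) $ n"
    by (simp only: mult.assoc fps_mult_of_nat_nth)
  also have "\<dots> = int k * (\<Sum>i=0..n. F $ i * f $ (n - i))"
    by (simp only: fps_mult_nth)
  also have "\<dots> = int k * (\<Sum>i=1..n. F $ i * f $ (n - i))"
    by (simp add: sum.atLeast_Suc_atMost F_def theta_log_deriv_nth_0)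
  also have "\<dots> = int k * (\<Sum>i=1..n. (-1) ^ (i + 1) * int (sigma i + sigma_odd i) * int (r k (n - i)))"
    by (intro arg_cong[where f = "(*) (int k)"] sum.cong) (auto simp: F_def theta_log_deriv_nth f_nth)
  finally show ?thesis by (simp add: f_nth)
qed

theorem mainTheorem17:
  fixes k n :: nat
  assumes "k \<ge> 2" and "n \<ge> 1"
  shows "int k * (\<Sum>i=1..n. int (sigma i + sigma_odd i) * (-1)^(n - i) * int (r k (n - i)))
         = (-1)^(n + 1) * int n * int (r k n)"
proof -
  have sign: "(-1) ^ (n + 1) * (-1) ^ (i + 1) = ((-1) ^ (n - i) :: int)" if "i \<le> n" for i
    using that by (auto simp: minus_one_power_iff)
  have "(-1) ^ (n + 1) * int n * int (r k n)
      = int k * ((-1) ^ (n + 1) *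
          (\<Sum>i=1..n. (-1) ^ (i + 1) * int (sigma i + sigma_odd i) * int (r k (n - i))))"
    unfolding mult.assoc r_recurrence by (rule mult.left_commute)
  also have "\<dots> = int k * (\<Sum>i=1..n. int (sigma i + sigma_odd i) * (-1) ^ (n - i) * int (r k (n - i)))"
    unfolding sum_distrib_left
    by (intro arg_cong[where f = "(*) (int k)"] sum.cong) (auto simp: sign[symmetric] mult_ac)
  finally show ?thesis ..
qed

end
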